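(* Let $\omega$ be a weight function, $W^{(\lambda)}_\alpha:=e^{\frac1\lambda\varphi^*_\omega(\lambda|\alpha|)}$ for $\lambda>0$, $\alpha\in\mathbb N_0^d$, and let $r>0$. Then: (a) $\omega(t)=O(t^{1/r})$ as $t\to+\infty$ if and only if for every $\lambda>0$ there exist $C,D\ge1$ such that $\alpha^{r\alpha}\le C D^{|\alpha|}W^{(\lambda)}_\alpha$ for all $\alpha\in\mathbb N^d$; (b) $\omega(t)=o(t^{1/r})$ as $t\to+\infty$ if and only if for all $\lambda,D>0$ there exists $C\ge1$ such that $\alpha^{r\alpha}\le C D^{|\alpha|}W^{(\lambda)}_\alpha$ for all $\alpha\in\mathbb N^d$. Moreover, in both (a) and (b) the quantifier "for every $\lambda>0$" may be replaced by "there exists $\lambda>0$".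
   Context: A weight function is a continuous increasing function $\omega:[0,+\infty)\to[0,+\infty)$ such that: ($\alpha$) there is $L\ge1$ with $\omega(2t)\le L(\omega(t)+1)$ for all $t\ge0$; ($\beta$) $\omega(t)=O(t^2)$ as $t\to+\infty$; ($\gamma$) $\log t=o(\omega(t))$ as $t\to+\infty$; ($\delta$) $\varphi_\omega(t):=\omega(e^t)$ is convex on $[0,+\infty)$. Young conjugate: $\varphi_\omega^*(s):=\sup_{t\ge0}\{ts-\varphi_\omega(t)\}$. Notation: $|\alpha|=\sum\alpha_j$, $\alpha^{r\alpha}:=\prod_j\alpha_j^{r\alpha_j}$. *)

theory Defs
  imports "HOL-Analysis.Analysis" "HOL-Library.Landau_Symbols"
begin

text \<open>Weight function omega : [0,+inf) -> [0,+inf) (values outside [0,+inf) are irrelevant).\<close>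
definition weight_function :: "(real \<Rightarrow> real) \<Rightarrow> bool" where
  "weight_function \<omega> \<longleftrightarrow>
     continuous_on {0..} \<omega> \<and> mono_on {0..} \<omega> \<and> (\<forall>t\<ge>0. \<omega> t \<ge> 0) \<and>
     (\<exists>L\<ge>1. \<forall>t\<ge>0. \<omega> (2 * t) \<le> L * (\<omega> t + 1)) \<and>
     \<omega> \<in> O[at_top](\<lambda>t. t ^ 2) \<and>
     (\<lambda>t. ln t) \<in> o[at_top](\<omega>) \<and>
     convex_on {0..} (\<lambda>t. \<omega> (exp t))"

definition phi_w :: "(real \<Rightarrow> real) \<Rightarrow> real \<Rightarrow> real" where
  "phi_w \<omega> t = \<omega> (exp t)"

definition phi_star :: "(real \<Rightarrow> real) \<Rightarrow> real \<Rightarrow> real" where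
  "phi_star \<omega> s = (SUP t\<in>{0..}. t * s - phi_w \<omega> t)"

definition abs_multi :: "('d::finite \<Rightarrow> nat) \<Rightarrow> nat" where
  "abs_multi \<alpha> = (\<Sum>i\<in>UNIV. \<alpha> i)"

definition W_seq :: "(real \<Rightarrow> real) \<Rightarrow> real \<Rightarrow> ('d::finite \<Rightarrow> nat) \<Rightarrow> real" where
  "W_seq \<omega> la \<alpha> = exp ((1 / la) * phi_star \<omega> (la * real (abs_multi \<alpha>)))"

definition multi_pow :: "real \<Rightarrow> ('d::finite \<Rightarrow> nat) \<Rightarrow> real" where
  "multi_pow r \<alpha> = (\<Prod>j\<in>UNIV. if \<alpha> j = 0 then 1 else real (\<alpha> j) powr (r * real (\<alpha> j)))"

end

theory Submission
  imports Defs "HOL-Real_Asymp.Real_Asymp"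
begin

text \<open>
  The right-hand side depends on \<open>\<alpha>\<close> only through \<open>n = |\<alpha>|\<close>, and
  \<open>\<alpha>\<^sup>r\<^sup>\<alpha> \<le> n\<^sup>r\<^sup>n\<close> with equality when \<open>\<alpha>\<close> is concentrated in one coordinate.
  After taking logarithms the estimate therefore reads
  \<open>r n ln n \<le> ln C + n ln D + \<phi>*(\<lambda> n) / \<lambda>\<close> for all \<open>n\<close>.

  If \<open>\<omega> x \<le> A x powr (1/r) + B\<close>, testing the supremum \<open>\<phi>*(\<lambda> n)\<close> at
  \<open>t = r (ln n + K)\<close> gives this with \<open>ln D = A exp K / \<lambda> - r K\<close>, which is
  arbitrarily negative when \<open>A\<close> is small.

  Conversely, let \<open>s\<close> be the slope of \<open>\<phi>\<close> on \<open>[t - 1, t]\<close> and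
  \<open>n = \<lfloor>s / \<lambda>\<rfloor>\<close>.  Convexity gives \<open>\<phi>*(\<lambda> n) \<le> t s - \<phi>(t - 1)\<close>,
  and the bound \<open>n (a - r ln n) \<le> r exp (a / r - 1)\<close>, uniform in \<open>n\<close>, yields
  \<open>\<omega> x \<le> \<lambda> ln x + \<lambda> (1 + ln C) + \<lambda> r exp ((1 + ln D) / r - 1) x powr (1/r)\<close>,
  whose leading coefficient tends to \<open>0\<close> with \<open>D\<close>.
\<close>

lemma weight_function_nonneg: "weight_function w \<Longrightarrow> t \<ge> 0 \<Longrightarrow> w t \<ge> 0"
  unfolding weight_function_def by blast

lemma weight_function_mono: "weight_function w \<Longrightarrow> mono_on {0..} w"
  unfolding weight_function_def by blast

lemma weight_function_mono_ge_1: "weight_function w \<Longrightarrow> mono_on {1..} w"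
  by (rule mono_on_subset[OF weight_function_mono]) auto

lemma weight_function_ln_smallo: "weight_function w \<Longrightarrow> (\<lambda>t. ln t) \<in> o[at_top](w)"
  unfolding weight_function_def by blast

lemma phi_w_convex: "weight_function w \<Longrightarrow> convex_on {0..} (phi_w w)"
  unfolding weight_function_def phi_w_def by simp

lemma phi_w_mono: "weight_function w \<Longrightarrow> mono_on {0..} (phi_w w)"
  unfolding phi_w_def by (rule mono_onI, rule mono_onD[OF weight_function_mono]) auto

lemma phi_w_nonneg: "weight_function w \<Longrightarrow> phi_w w t \<ge> 0"
  unfolding phi_w_def by (rule weight_function_nonneg) auto

subsection \<open>The Young conjugate\<close>

lemma phi_star_bdd_above:
  assumes w: "weight_function w" and s: "s \<ge> 0"
  shows "bdd_above ((\<lambda>t. t * s - phi_w w t) ` {0..})"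
proof -
  have "eventually (\<lambda>x. norm (ln x) \<le> 1 / (s + 1) * norm (w x)) at_top"
    using landau_o.smallD[OF weight_function_ln_smallo[OF w], of "1 / (s + 1)"] s by simp
  then obtain N where N: "\<And>x. x \<ge> N \<Longrightarrow> \<bar>ln x\<bar> \<le> \<bar>w x\<bar> / (s + 1)"
    by (auto simp: eventually_at_top_linorder)
  have "t * s - phi_w w t \<le> \<bar>ln N\<bar> * s" if t: "t \<ge> 0" for t
  proof (cases "exp t \<ge> N")
    case True
    then have "t \<le> phi_w w t / (s + 1)"
      using N[of "exp t"] weight_function_nonneg[OF w, of "exp t"] by (simp add: phi_w_def)
    then have "t * s \<le> phi_w w t"
      using s t by (simp add: field_simps)
    moreover have "0 \<le> \<bar>ln N\<bar> * s" using s by simp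
    ultimately show ?thesis by linarith
  next
    case False
    then have "t < ln N"
      using ln_less_cancel_iff[of "exp t" N] exp_gt_zero[of t] by simp
    then have "t * s \<le> \<bar>ln N\<bar> * s"
      using s by (intro mult_right_mono) auto
    then show ?thesis
      using phi_w_nonneg[OF w, of t] by linarith
  qed
  then show ?thesis by (auto intro!: bdd_aboveI2)
qed

lemma phi_star_upper:
  assumes "weight_function w" "s \<ge> 0" "t \<ge> 0"
  shows "t * s - phi_w w t \<le> phi_star w s"
  unfolding phi_star_def using phi_star_bdd_above[OF assms(1,2)] assms(3)
  by (intro cSUP_upper) auto

text \<open>The shift is needed only on \<open>[x, y]\<close>, where the graph lies below the secant
  and monotonicity takes over from convexity.\<close>

lemma convex_mono_ge_shifted_secant:
  fixes f :: "real \<Rightarrow> real"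
  assumes f: "convex_on {0..} f" "mono_on {0..} f" and xy: "0 \<le> x" "x < y" and u: "0 \<le> u"
  defines "s \<equiv> (f y - f x) / (y - x)"
  shows "f x + s * (u - y) \<le> f u"
proof -
  have s_eq: "s = (f x - f y) / (x - y)"
    unfolding s_def by (metis minus_diff_eq minus_divide_divide)
  have s: "s \<ge> 0"
    using mono_onD[OF f(2), of x y] xy by (simp add: s_def)
  consider "u < x" | "x \<le> u" "u \<le> y" | "y < u" by linarith
  then show ?thesis
  proof cases
    case 1
    have "(f u - f x) / (u - x) \<le> s"
      using order_trans[OF convex_on_slope_le[OF f(1), of u y x]] 1 u xy by (simp add: s_eq)
    then have "f x - f u \<le> s * (x - u)"
      using 1 by (simp add: divide_le_eq algebra_simps)
    moreover have "s * (u - y) \<le> s * (u - x)"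
      using s xy by (intro mult_left_mono) auto
    ultimately show ?thesis by (simp add: algebra_simps)
  next
    case 2
    have "s * (u - y) \<le> 0" using s 2 by (simp add: mult_nonneg_nonpos)
    then show ?thesis using mono_onD[OF f(2), of x u] 2 xy by simp
  next
    case 3
    have "s \<le> (f y - f u) / (y - u)"
      using order_trans[OF convex_on_slope_le[OF f(1), of x u y]] 3 xy by (simp add: s_eq)
    then have "s * (u - y) \<le> f u - f y"
      using 3 by (simp add: le_divide_eq algebra_simps)
    moreover have "f x \<le> f y" using mono_onD[OF f(2), of x y] xy by simp
    ultimately show ?thesis by simp
  qed
qed

lemma phi_star_le_secant:
  assumes w: "weight_function w" and t: "t \<ge> 1"
    and s: "0 \<le> s" "s \<le> phi_w w t - phi_w w (t - 1)"
  shows "phi_star w s \<le> t * (phi_w w t - phi_w w (t - 1)) - phi_w w (t - 1)"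
  unfolding phi_star_def
proof (rule cSUP_least)
  fix u :: real assume u: "u \<in> {0..}"
  have "phi_w w (t - 1) + (phi_w w t - phi_w w (t - 1)) * (u - t) \<le> phi_w w u"
    using convex_mono_ge_shifted_secant[OF phi_w_convex[OF w] phi_w_mono[OF w], of "t - 1" t u] t u
    by simp
  moreover have "u * s \<le> u * (phi_w w t - phi_w w (t - 1))"
    using u s by (intro mult_left_mono) auto
  ultimately show "u * s - phi_w w u \<le> t * (phi_w w t - phi_w w (t - 1)) - phi_w w (t - 1)"
    by (simp add: algebra_simps)
qed auto

subsection \<open>Reduction to one-dimensional multi-indices\<close>

lemma multi_pow_le_exp:
  fixes r :: real
  assumes "r \<ge> 0"
  shows "multi_pow r \<alpha> \<le> exp (r * abs_multi \<alpha> * ln (abs_multi \<alpha>))"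
proof -
  have "multi_pow r \<alpha> \<le> (\<Prod>j\<in>UNIV. exp (r * \<alpha> j * ln (abs_multi \<alpha>)))"
    unfolding multi_pow_def
  proof (rule prod_mono)
    fix j
    have "\<alpha> j \<le> abs_multi \<alpha>"
      unfolding abs_multi_def by (rule member_le_sum) auto
    then have "\<alpha> j \<noteq> 0 \<Longrightarrow> real (\<alpha> j) powr (r * \<alpha> j) \<le> exp (r * \<alpha> j * ln (abs_multi \<alpha>))"
      using assms by (auto simp: powr_def mult_left_mono)
    then show "0 \<le> (if \<alpha> j = 0 then 1 else real (\<alpha> j) powr (r * \<alpha> j)) \<and>
        (if \<alpha> j = 0 then 1 else real (\<alpha> j) powr (r * \<alpha> j)) \<le> exp (r * \<alpha> j * ln (abs_multi \<alpha>))"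
      by auto
  qed
  also have "\<dots> = exp (\<Sum>j\<in>UNIV. r * \<alpha> j * ln (abs_multi \<alpha>))"
    by (simp add: exp_sum)
  also have "(\<Sum>j\<in>UNIV. r * \<alpha> j * ln (abs_multi \<alpha>)) = r * abs_multi \<alpha> * ln (abs_multi \<alpha>)"
    by (simp add: abs_multi_def of_nat_sum sum_distrib_left sum_distrib_right)
  finally show ?thesis .
qed

lemma abs_multi_single: "abs_multi (\<lambda>i. if i = i0 then n else 0) = n"
  unfolding abs_multi_def by simp

lemma multi_pow_single: "multi_pow r (\<lambda>i. if i = i0 then n else 0) = exp (r * n * ln n)"
proof -
  have "multi_pow r (\<lambda>i. if i = i0 then n else 0) =
      (\<Prod>j\<in>UNIV. if j = i0 then (if n = 0 then 1 else real n powr (r * n)) else 1)"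
    unfolding multi_pow_def by (intro prod.cong) auto
  then show ?thesis by (simp add: powr_def mult_ac)
qed

lemma multi_pow_bound_iff_log_bound:
  assumes "r \<ge> 0" "C > 0" "D > 0"
  shows "(\<forall>\<alpha> :: 'd::finite \<Rightarrow> nat. multi_pow r \<alpha> \<le> C * D ^ abs_multi \<alpha> * W_seq w la \<alpha>) \<longleftrightarrow>
    (\<forall>n::nat. r * n * ln n \<le> ln C + n * ln D + phi_star w (la * n) / la)"
proof -
  have rhs: "C * D ^ abs_multi \<alpha> * W_seq w la \<alpha> =
      exp (ln C + abs_multi \<alpha> * ln D + phi_star w (la * abs_multi \<alpha>) / la)" for \<alpha> :: "'d \<Rightarrow> nat"
    using assms by (simp add: W_seq_def exp_add exp_of_nat_mult)
  show ?thesis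
  proof
    assume bound: "\<forall>\<alpha> :: 'd \<Rightarrow> nat. multi_pow r \<alpha> \<le> C * D ^ abs_multi \<alpha> * W_seq w la \<alpha>"
    show "\<forall>n::nat. r * n * ln n \<le> ln C + n * ln D + phi_star w (la * n) / la"
    proof
      fix n :: nat
      show "r * n * ln n \<le> ln C + n * ln D + phi_star w (la * n) / la"
        using bound[rule_format, of "\<lambda>i. if i = undefined then n else 0"]
          rhs[of "\<lambda>i. if i = undefined then n else 0"]
        by (simp add: multi_pow_single abs_multi_single)
    qed
  next
    assume log: "\<forall>n::nat. r * n * ln n \<le> ln C + n * ln D + phi_star w (la * n) / la"
    show "\<forall>\<alpha> :: 'd \<Rightarrow> nat. multi_pow r \<alpha> \<le> C * D ^ abs_multi \<alpha> * W_seq w la \<alpha>"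
    proof
      fix \<alpha> :: "'d \<Rightarrow> nat"
      have "multi_pow r \<alpha> \<le> exp (r * abs_multi \<alpha> * ln (abs_multi \<alpha>))"
        by (rule multi_pow_le_exp[OF assms(1)])
      also have "\<dots> \<le> C * D ^ abs_multi \<alpha> * W_seq w la \<alpha>"
        unfolding rhs using log by simp
      finally show "multi_pow r \<alpha> \<le> C * D ^ abs_multi \<alpha> * W_seq w la \<alpha>" .
    qed
  qed
qed

subsection \<open>From growth of the weight to the estimate\<close>

lemma le_powr_plus_const_if_eventually:
  fixes f :: "real \<Rightarrow> real"
  assumes "mono_on {1..} f" "c \<ge> 0" "eventually (\<lambda>x. f x \<le> c * x powr p) at_top"
  obtains B where "B \<ge> 0" "\<And>x. x \<ge> 1 \<Longrightarrow> f x \<le> c * x powr p + B"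
proof -
  obtain N where N: "\<And>x. x \<ge> N \<Longrightarrow> f x \<le> c * x powr p"
    using assms(3) by (auto simp: eventually_at_top_linorder)
  define X where "X = max N 1"
  have "f x \<le> c * x powr p + max 0 (f X)" if x: "x \<ge> 1" for x
  proof (cases "x \<ge> X")
    case True
    then show ?thesis using N[of x] X_def by auto
  next
    case False
    then have "f x \<le> f X" using x X_def by (intro mono_onD[OF assms(1)]) auto
    moreover have "0 \<le> c * x powr p" using assms(2) by simp
    ultimately show ?thesis by linarith
  qed
  then show thesis by (intro that[of "max 0 (f X)"]) auto
qed

lemma log_bound_if_weight_le_powr:
  fixes n :: nat and r la :: real
  assumes w: "weight_function w" and r: "r > 0" and la: "la > 0"
    and AB: "A \<ge> 0" "B \<ge> 0" and K: "K \<ge> 0"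
    and bound: "\<And>x. x \<ge> 1 \<Longrightarrow> w x \<le> A * x powr (1 / r) + B"
  shows "r * n * ln n \<le> (A + B) / la + n * (A * exp K / la - r * K) + phi_star w (la * n) / la"
proof (cases "n = 0")
  case True
  have "- w 1 \<le> phi_star w 0"
    using phi_star_upper[OF w, of 0 0] by (simp add: phi_w_def)
  then have "0 \<le> A + B + phi_star w 0"
    using bound[of 1] by simp
  then show ?thesis using True la by (simp add: add_divide_distrib[symmetric])
next
  case False
  define t where "t = r * (ln n + K)"
  have "ln n \<ge> 0" using False by simp
  then have t: "t \<ge> 0" using K r by (simp add: t_def)
  have "exp t powr (1 / r) = n * exp K"
    using r False by (simp add: powr_def t_def exp_add)
  then have "phi_w w t \<le> A * n * exp K + B"
    using bound[of "exp t"] t by (simp add: phi_w_def)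
  moreover have "t * (la * n) - phi_w w t \<le> phi_star w (la * n)"
    using phi_star_upper[OF w _ t] la by simp
  ultimately have "la * (r * n * ln n) \<le> B + n * (A * exp K - la * r * K) + phi_star w (la * n)"
    by (simp add: t_def algebra_simps)
  also have "\<dots> \<le> A + B + n * (A * exp K - la * r * K) + phi_star w (la * n)"
    using AB by simp
  finally have "r * n * ln n \<le> (A + B + n * (A * exp K - la * r * K) + phi_star w (la * n)) / la"
    using la by (simp add: pos_le_divide_eq mult.commute)
  also have "\<dots> = (A + B) / la + n * (A * exp K / la - r * K) + phi_star w (la * n) / la"
    using la by (simp add: field_simps)
  finally show ?thesis .
qed

subsection \<open>From the estimate to growth of the weight\<close>

lemma mult_diff_mult_ln_le_exp:
  fixes n a r :: real
  assumes "n > 0" "r > 0"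
  shows "n * (a - r * ln n) \<le> r * exp (a / r - 1)"
proof -
  define y where "y = exp (a / r - 1) / n"
  have y: "y > 0" using assms by (simp add: y_def)
  have "a - r * ln n = r * (ln y + 1)"
    using assms by (simp add: y_def ln_div field_simps)
  then have "n * (a - r * ln n) = r * n * (ln y + 1)" by simp
  also have "\<dots> \<le> r * n * y"
    using ln_le_minus_one[OF y] assms by (intro mult_left_mono) auto
  also have "\<dots> = r * exp (a / r - 1)" using assms by (simp add: y_def)
  finally show ?thesis .
qed

lemma weight_le_if_log_bound:
  assumes w: "weight_function w" and r: "r > 0" and la: "la > 0"
    and bound: "\<And>n::nat. r * n * ln n \<le> c + n * d + phi_star w (la * n) / la"
    and x: "x \<ge> exp 1"
  shows "w x \<le> la * ln x + la * (1 + c) + la * r * exp ((1 + d) / r - 1) * x powr (1 / r)"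
proof -
  have x0: "x > 0" using x exp_gt_zero[of 1] by linarith
  define t where "t = ln x"
  have t: "t \<ge> 1" using x x0 by (simp add: t_def ln_ge_iff)
  define s where "s = phi_w w t - phi_w w (t - 1)"
  have s: "s \<ge> 0" using mono_onD[OF phi_w_mono[OF w], of "t - 1" t] t by (simp add: s_def)
  define n where "n = nat \<lfloor>s / la\<rfloor>"
  have "real n \<le> s / la" "s / la < real n + 1"
    using s la unfolding n_def by (auto simp: of_nat_nat)
  then have n: "la * n \<le> s" "s \<le> la * (n + 1)"
    using la by (auto simp: field_simps)
  have "phi_star w (la * n) \<le> t * s - phi_w w (t - 1)"
    unfolding s_def using phi_star_le_secant[OF w t] n la s_def by simp
  then have "w x \<le> s * (t + 1) - phi_star w (la * n)"
    using x0 by (simp add: s_def t_def phi_w_def algebra_simps)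
  also have "\<dots> \<le> la * (n + 1) * (t + 1) + la * (c + n * d - r * n * ln n)"
  proof -
    have "s * (t + 1) \<le> la * (n + 1) * (t + 1)" using n t by (intro mult_right_mono) auto
    moreover have "- phi_star w (la * n) \<le> la * (c + n * d - r * n * ln n)"
      using bound[of n] la by (simp add: field_simps)
    ultimately show ?thesis by linarith
  qed
  also have "\<dots> = la * (t + 1 + c) + la * (n * ((t + 1 + d) - r * ln n))"
    by (simp add: algebra_simps)
  also have "\<dots> \<le> la * (t + 1 + c) + la * (r * exp ((t + 1 + d) / r - 1))"
    using mult_diff_mult_ln_le_exp[of n r "t + 1 + d"] r la
    by (cases "n = 0") (auto intro: mult_left_mono)
  also have "exp ((t + 1 + d) / r - 1) = exp ((1 + d) / r - 1) * x powr (1 / r)"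
    using x0 r by (simp add: powr_def t_def exp_add[symmetric] field_simps)
  finally show ?thesis by (simp add: t_def algebra_simps)
qed

lemma bigo_powr_if_eventually_le:
  fixes f :: "real \<Rightarrow> real"
  assumes "p > 0" "eventually (\<lambda>x. 0 \<le> f x \<and> f x \<le> a * ln x + b + M * x powr p) at_top"
  shows "f \<in> O[at_top](\<lambda>x. x powr p)"
proof -
  have "f \<in> O[at_top](\<lambda>x. a * ln x + b + M * x powr p)"
    by (rule landau_o.big_mono) (use assms(2) in \<open>auto elim!: eventually_mono\<close>)
  also have "(\<lambda>x. a * ln x + b + M * x powr p) \<in> O[at_top](\<lambda>x. x powr p)"
  proof (rule sum_in_bigo)
    show "(\<lambda>x. a * ln x + b) \<in> O[at_top](\<lambda>x. x powr p)"
      using assms(1) by (intro landau_o.small_imp_big) real_asymp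
  qed simp
  finally show ?thesis .
qed

lemma smallo_powr_if_eventually_le:
  fixes f :: "real \<Rightarrow> real"
  assumes "p > 0"
    and "\<And>c. c > 0 \<Longrightarrow> \<exists>a b. eventually (\<lambda>x. 0 \<le> f x \<and> f x \<le> a * ln x + b + c * x powr p) at_top"
  shows "f \<in> o[at_top](\<lambda>x. x powr p)"
proof (rule landau_o.smallI)
  fix c :: real assume c: "c > 0"
  then obtain a b where le: "eventually (\<lambda>x. 0 \<le> f x \<and> f x \<le> a * ln x + b + c / 2 * x powr p) at_top"
    using assms(2)[of "c / 2"] by auto
  have "(\<lambda>x. a * ln x + b) \<in> o[at_top](\<lambda>x. x powr p)"
    using assms(1) by real_asymp
  then have "eventually (\<lambda>x. norm (a * ln x + b) \<le> c / 2 * norm (x powr p)) at_top"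
    by (rule landau_o.smallD) (use c in simp)
  with le show "eventually (\<lambda>x. norm (f x) \<le> c * norm (x powr p)) at_top"
  proof eventually_elim
    case (elim x)
    then have "a * ln x + b \<le> c / 2 * x powr p"
      using abs_ge_self[of "a * ln x + b"] by simp
    with elim show ?case by simp
  qed
qed

lemma multi_pow_bound_if_bigo:
  assumes w: "weight_function w" and r: "r > 0" and la: "la > 0"
    and O: "w \<in> O[at_top](\<lambda>t. t powr (1 / r))"
  shows "\<exists>C\<ge>1. \<exists>D\<ge>1. \<forall>\<alpha> :: 'd::finite \<Rightarrow> nat. multi_pow r \<alpha> \<le> C * D ^ abs_multi \<alpha> * W_seq w la \<alpha>"
proof -
  obtain c where c: "c > 0" "eventually (\<lambda>x. norm (w x) \<le> c * norm (x powr (1 / r))) at_top"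
    using landau_o.bigE[OF O] by blast
  then have "eventually (\<lambda>x. w x \<le> c * x powr (1 / r)) at_top"
    by (auto elim!: eventually_mono)
  then obtain B where B: "B \<ge> 0" "\<And>x. x \<ge> 1 \<Longrightarrow> w x \<le> c * x powr (1 / r) + B"
    using le_powr_plus_const_if_eventually[OF weight_function_mono_ge_1[OF w] less_imp_le[OF c(1)]]
    by blast
  define C where "C = exp ((c + B) / la)"
  define D where "D = exp (c / la)"
  have CD: "C \<ge> 1" "D \<ge> 1"
    using c(1) B(1) la by (simp_all add: C_def D_def)
  have "\<forall>n::nat. r * n * ln n \<le> ln C + n * ln D + phi_star w (la * n) / la"
    using log_bound_if_weight_le_powr[OF w r la _ B(1) order_refl B(2)] c(1)
    by (simp add: C_def D_def)
  then have "\<forall>\<alpha> :: 'd \<Rightarrow> nat. multi_pow r \<alpha> \<le> C * D ^ abs_multi \<alpha> * W_seq w la \<alpha>"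
    using multi_pow_bound_iff_log_bound[where 'd = 'd, of r C D] r CD by simp
  with CD show ?thesis by blast
qed

lemma multi_pow_bound_if_smallo:
  assumes w: "weight_function w" and r: "r > 0" and la: "la > 0" and D: "D > 0"
    and o: "w \<in> o[at_top](\<lambda>t. t powr (1 / r))"
  shows "\<exists>C\<ge>1. \<forall>\<alpha> :: 'd::finite \<Rightarrow> nat. multi_pow r \<alpha> \<le> C * D ^ abs_multi \<alpha> * W_seq w la \<alpha>"
proof -
  define K where "K = max 0 ((1 - ln D) / r)"
  define A where "A = la * exp (- K)"
  have K: "K \<ge> 0" "1 - r * K \<le> ln D"
    using r by (auto simp: K_def max_def field_simps)
  have A: "A > 0" "A * exp K / la - r * K = 1 - r * K"
    using la by (auto simp: A_def exp_minus)
  have "eventually (\<lambda>x. w x \<le> A * x powr (1 / r)) at_top"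
    using landau_o.smallD[OF o A(1)] by (auto elim!: eventually_mono)
  then obtain B where B: "B \<ge> 0" "\<And>x. x \<ge> 1 \<Longrightarrow> w x \<le> A * x powr (1 / r) + B"
    using le_powr_plus_const_if_eventually[OF weight_function_mono_ge_1[OF w] less_imp_le[OF A(1)]]
    by blast
  define C where "C = exp ((A + B) / la)"
  have C: "C \<ge> 1" using A(1) B(1) la by (simp add: C_def)
  have "r * n * ln n \<le> ln C + n * ln D + phi_star w (la * n) / la" for n :: nat
  proof -
    have "r * n * ln n \<le> ln C + n * (1 - r * K) + phi_star w (la * n) / la"
      using log_bound_if_weight_le_powr[OF w r la _ B(1) K(1) B(2), of n] A
      by (simp add: C_def)
    moreover have "n * (1 - r * K) \<le> n * ln D"
      using K(2) by (intro mult_left_mono) auto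
    ultimately show ?thesis by linarith
  qed
  then have "\<forall>\<alpha> :: 'd \<Rightarrow> nat. multi_pow r \<alpha> \<le> C * D ^ abs_multi \<alpha> * W_seq w la \<alpha>"
    using multi_pow_bound_iff_log_bound[where 'd = 'd, of r C D] r C D by simp
  with C show ?thesis by blast
qed

lemma bigo_if_multi_pow_bound:
  assumes w: "weight_function w" and r: "r > 0" and la: "la > 0" and CD: "C > 0" "D > 0"
    and bound: "\<forall>\<alpha> :: 'd::finite \<Rightarrow> nat. multi_pow r \<alpha> \<le> C * D ^ abs_multi \<alpha> * W_seq w la \<alpha>"
  shows "w \<in> O[at_top](\<lambda>t. t powr (1 / r))"
proof (rule bigo_powr_if_eventually_le)
  show "1 / r > 0" using r by simp
  have log: "\<And>n::nat. r * n * ln n \<le> ln C + n * ln D + phi_star w (la * n) / la"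
    using multi_pow_bound_iff_log_bound[where 'd = 'd, OF less_imp_le[OF r] CD] bound by blast
  show "eventually (\<lambda>x. 0 \<le> w x \<and> w x \<le> la * ln x + la * (1 + ln C) +
      la * r * exp ((1 + ln D) / r - 1) * x powr (1 / r)) at_top"
    using eventually_ge_at_top[of "exp 1"]
  proof eventually_elim
    case (elim x)
    show ?case
      using weight_le_if_log_bound[OF w r la log elim]
        weight_function_nonneg[OF w order_trans[OF exp_ge_zero elim]] by blast
  qed
qed

lemma smallo_if_multi_pow_bound:
  assumes w: "weight_function w" and r: "r > 0" and la: "la > 0"
    and bound: "\<forall>D>0. \<exists>C\<ge>1. \<forall>\<alpha> :: 'd::finite \<Rightarrow> nat. multi_pow r \<alpha> \<le> C * D ^ abs_multi \<alpha> * W_seq w la \<alpha>"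
  shows "w \<in> o[at_top](\<lambda>t. t powr (1 / r))"
proof (rule smallo_powr_if_eventually_le)
  show "1 / r > 0" using r by simp
  fix c :: real assume c: "c > 0"
  define D where "D = exp (r * (ln (c / (la * r)) + 1) - 1)"
  have "D > 0" by (simp add: D_def)
  then obtain C where C: "C \<ge> 1" and
    "\<forall>\<alpha> :: 'd \<Rightarrow> nat. multi_pow r \<alpha> \<le> C * D ^ abs_multi \<alpha> * W_seq w la \<alpha>"
    using bound by blast
  then have log: "\<And>n::nat. r * n * ln n \<le> ln C + n * ln D + phi_star w (la * n) / la"
    using multi_pow_bound_iff_log_bound[where 'd = 'd, OF less_imp_le[OF r], of C D] \<open>D > 0\<close> by fastforce
  have coeff: "la * r * exp ((1 + ln D) / r - 1) = c"
    using r la c by (simp add: D_def)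
  have "eventually (\<lambda>x. 0 \<le> w x \<and> w x \<le> la * ln x + la * (1 + ln C) + c * x powr (1 / r)) at_top"
    using eventually_ge_at_top[of "exp 1"]
  proof eventually_elim
    case (elim x)
    show ?case
      using weight_le_if_log_bound[OF w r la log elim, unfolded coeff]
        weight_function_nonneg[OF w order_trans[OF exp_ge_zero elim]] by blast
  qed
  then show "\<exists>a b. eventually (\<lambda>x. 0 \<le> w x \<and> w x \<le> a * ln x + b + c * x powr (1 / r)) at_top"
    by blast
qed

lemma iff_all_pos_and_iff_ex_pos:
  fixes P :: "real \<Rightarrow> bool"
  assumes "A \<longrightarrow> (\<forall>x>0. P x)" and "(\<exists>x>0. P x) \<longrightarrow> A"
  shows "(A \<longleftrightarrow> (\<forall>x>0. P x)) \<and> (A \<longleftrightarrow> (\<exists>x>0. P x))"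
  using assms zero_less_one by blast

theorem lemma6p6:
  fixes \<omega> :: "real \<Rightarrow> real" and r :: real
  assumes "weight_function \<omega>" and "r > 0"
  shows
   "(\<omega> \<in> O[at_top](\<lambda>t. t powr (1 / r)) \<longleftrightarrow>
      (\<forall>la>0. \<exists>C\<ge>1. \<exists>D\<ge>1. \<forall>\<alpha> :: 'd::finite \<Rightarrow> nat.
          multi_pow r \<alpha> \<le> C * D ^ abs_multi \<alpha> * W_seq \<omega> la \<alpha>)) \<and>
    (\<omega> \<in> O[at_top](\<lambda>t. t powr (1 / r)) \<longleftrightarrow>
      (\<exists>la>0. \<exists>C\<ge>1. \<exists>D\<ge>1. \<forall>\<alpha> :: 'd \<Rightarrow> nat.
          multi_pow r \<alpha> \<le> C * D ^ abs_multi \<alpha> * W_seq \<omega> la \<alpha>)) \<and>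
    (\<omega> \<in> o[at_top](\<lambda>t. t powr (1 / r)) \<longleftrightarrow>
      (\<forall>la>0. \<forall>D>0. \<exists>C\<ge>1. \<forall>\<alpha> :: 'd \<Rightarrow> nat.
          multi_pow r \<alpha> \<le> C * D ^ abs_multi \<alpha> * W_seq \<omega> la \<alpha>)) \<and>
    (\<omega> \<in> o[at_top](\<lambda>t. t powr (1 / r)) \<longleftrightarrow>
      (\<exists>la>0. \<forall>D>0. \<exists>C\<ge>1. \<forall>\<alpha> :: 'd \<Rightarrow> nat.
          multi_pow r \<alpha> \<le> C * D ^ abs_multi \<alpha> * W_seq \<omega> la \<alpha>))"
proof -
  note w = assms(1) and r = assms(2)
  have O_all: "\<omega> \<in> O[at_top](\<lambda>t. t powr (1 / r)) \<longrightarrow>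
      (\<forall>la>0. \<exists>C\<ge>1. \<exists>D\<ge>1. \<forall>\<alpha> :: 'd \<Rightarrow> nat. multi_pow r \<alpha> \<le> C * D ^ abs_multi \<alpha> * W_seq \<omega> la \<alpha>)"
    using multi_pow_bound_if_bigo[where 'd = 'd, OF w r] by blast
  have O_ex: "(\<exists>la>0. \<exists>C\<ge>1. \<exists>D\<ge>1. \<forall>\<alpha> :: 'd \<Rightarrow> nat. multi_pow r \<alpha> \<le> C * D ^ abs_multi \<alpha> * W_seq \<omega> la \<alpha>)
      \<longrightarrow> \<omega> \<in> O[at_top](\<lambda>t. t powr (1 / r))"
    using bigo_if_multi_pow_bound[where 'd = 'd, OF w r] by (meson less_le_trans zero_less_one)
  have o_all: "\<omega> \<in> o[at_top](\<lambda>t. t powr (1 / r)) \<longrightarrow>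
      (\<forall>la>0. \<forall>D>0. \<exists>C\<ge>1. \<forall>\<alpha> :: 'd \<Rightarrow> nat. multi_pow r \<alpha> \<le> C * D ^ abs_multi \<alpha> * W_seq \<omega> la \<alpha>)"
    using multi_pow_bound_if_smallo[where 'd = 'd, OF w r] by blast
  have o_ex: "(\<exists>la>0. \<forall>D>0. \<exists>C\<ge>1. \<forall>\<alpha> :: 'd \<Rightarrow> nat. multi_pow r \<alpha> \<le> C * D ^ abs_multi \<alpha> * W_seq \<omega> la \<alpha>)
      \<longrightarrow> \<omega> \<in> o[at_top](\<lambda>t. t powr (1 / r))"
    using smallo_if_multi_pow_bound[where 'd = 'd, OF w r] by blast
  show ?thesis
    using iff_all_pos_and_iff_ex_pos[OF O_all O_ex] iff_all_pos_and_iff_ex_pos[OF o_all o_ex]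
    by (elim conjE) (intro conjI)
qed

end
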